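(* Let $u$ be a fast decreasing distribution on $\mathbb R^D$ (acting on $\mathbb C[\boldsymbol x]$), $\mathcal Q_2\in\mathbb C[\boldsymbol x]$ with $Z(\mathcal Q_2)\cap\operatorname{supp}u=\varnothing$, and $\check u$ a linear functional on $\mathbb C[\boldsymbol x]$ with $\mathcal Q_2\check u=u$; assume $u,\check u$ quasi-definite, and let $R=\langle\check u,P(\boldsymbol x)\chi(\boldsymbol x)^\top\rangle$. Then for every $k\ge1$ $$\check P_{[k]}(\boldsymbol x)=\Theta_*\begin{pmatrix}R_{[0],[0]}&\cdots&R_{[0],[k-1]}&P_{[0]}(\boldsymbol x)\\ \vdots&&\vdots&\vdots\\ R_{[k],[0]}&\cdots&R_{[k],[k-1]}&P_{[k]}(\boldsymbol x)\end{pmatrix},\qquad \check H_{[k]}=\Theta_*\big(R^{[k+1]}\big).$$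
   Context: $D\ge1$, $\boldsymbol x=(x_1,\dots,x_D)^\top$. $[k]=\{\boldsymbol\alpha\in\mathbb Z_+^D:|\boldsymbol\alpha|=k\}$; multi-indices ordered by graded lexicographic order; $\chi(\boldsymbol x)$ the semi-infinite vector of monomials in this order with blocks $\chi_{[k]}$; semi-infinite matrices partitioned in blocks $A_{[k],[l]}\in\mathbb C^{|[k]|\times|[l]|}$, $A^{[k]}$ the truncation to block rows/columns $0,\dots,k-1$. For a linear functional $u$ on $\mathbb C[\boldsymbol x]$ (applied entrywise), $\langle Qu,P\rangle:=\langle u,QP\rangle$; moment matrix $G=\langle u,\chi\chi^\top\rangle$; quasi-definite means $\det G^{[k]}\ne0$ for all $k$, giving $G=S^{-1}HS^{-\top}$ with $S$ block lower unitriangular and $H$ block diagonal with blocks $H_{[k]}$ (quasi-tau matrices); monic orthogonal polynomials $P(\boldsymbol x)=S\chi(\boldsymbol x)$ with blocks $P_{[k]}$. Checked symbols ($\check P_{[k]},\check H_{[k]}$) refer to $\check u$. Last quasi-determinant: for $M=\begin{pmatrix}A&B\\C&D\end{pmatrix}$ with $A$ square invertible (here the last block row and last block column are those displayed last), $\Theta_*(M)=D-CA^{-1}B$. *)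

theory Defs
  imports "HOL-Library.Poly_Mapping" "Jordan_Normal_Form.Determinant" "Jordan_Normal_Form.Gauss_Jordan_Elimination"
begin

(* Multivariate polynomials over C: coefficients indexed by exponent maps (variable i is x_(i+1)). *)
type_synonym mpoly = "(nat \<Rightarrow>\<^sub>0 nat) \<Rightarrow>\<^sub>0 complex"

definition pring :: "nat \<Rightarrow> mpoly set" where
  "pring D = {p. \<forall>m\<in>Poly_Mapping.keys p. Poly_Mapping.keys m \<subseteq> {..<D}}"

definition csmult :: "complex \<Rightarrow> mpoly \<Rightarrow> mpoly" where
  "csmult c p = Poly_Mapping.single 0 c * p"

definition lin_fun :: "nat \<Rightarrow> (mpoly \<Rightarrow> complex) \<Rightarrow> bool" where
  "lin_fun D u \<longleftrightarrow> (\<forall>p\<in>pring D. \<forall>q\<in>pring D. u (p + q) = u p + u q) \<and>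
                    (\<forall>c. \<forall>p\<in>pring D. u (csmult c p) = c * u p)"

(* multi-indices of length D and total degree k, in (descending) lexicographic order:
   (k,0,..,0) first *)
fun mis :: "nat \<Rightarrow> nat \<Rightarrow> nat list list" where
  "mis 0 k = (if k = 0 then [[]] else [])"
| "mis (Suc d) k = concat (map (\<lambda>i. map (\<lambda>b. i # b) (mis d (k - i))) (rev [0..<Suc k]))"

(* all multi-indices of degree < n, graded lexicographic order *)
definition mono_list :: "nat \<Rightarrow> nat \<Rightarrow> nat list list" where
  "mono_list D n = concat (map (mis D) [0..<n])"

(* bs D k = number of multi-indices of degree < k = size of the truncation A^[k] *)
definition bs :: "nat \<Rightarrow> nat \<Rightarrow> nat" where
  "bs D k = length (mono_list D k)"

(* the n-th multi-index (position n, counting from 0) of the semi-infinite vector chi *)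
definition ix :: "nat \<Rightarrow> nat \<Rightarrow> nat list" where
  "ix D n = mono_list D (Suc n) ! n"

(* degree, i.e. block number, of position n *)
definition blk :: "nat \<Rightarrow> nat \<Rightarrow> nat" where
  "blk D n = sum_list (ix D n)"

definition mexp :: "nat list \<Rightarrow> (nat \<Rightarrow>\<^sub>0 nat)" where
  "mexp a = (\<Sum>i<length a. Poly_Mapping.single i (a ! i))"

definition xmon :: "nat list \<Rightarrow> mpoly" where
  "xmon a = Poly_Mapping.single (mexp a) 1"

definition peval :: "(nat \<Rightarrow> complex) \<Rightarrow> mpoly \<Rightarrow> complex" where
  "peval x p = (\<Sum>m\<in>Poly_Mapping.keys p. Poly_Mapping.lookup p m * (\<Prod>i\<in>Poly_Mapping.keys m. x i ^ Poly_Mapping.lookup m i))"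

(* semi-infinite matrices are functions nat => nat => complex (positions in graded lex order) *)
type_synonym smat = "nat \<Rightarrow> nat \<Rightarrow> complex"

(* truncation A^[k]: block rows/columns 0..k-1 *)
definition trunc :: "nat \<Rightarrow> smat \<Rightarrow> nat \<Rightarrow> complex mat" where
  "trunc D A k = mat (bs D k) (bs D k) (\<lambda>(i, j). A i j)"

(* moment matrix G = <u, chi chi^T> *)
definition moment_mat :: "nat \<Rightarrow> (mpoly \<Rightarrow> complex) \<Rightarrow> smat" where
  "moment_mat D u i j = u (xmon (ix D i) * xmon (ix D j))"

definition quasi_definite :: "nat \<Rightarrow> (mpoly \<Rightarrow> complex) \<Rightarrow> bool" where
  "quasi_definite D u \<longleftrightarrow> (\<forall>k. det (trunc D (moment_mat D u) k) \<noteq> 0)"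

definition block_lower_unitriangular :: "nat \<Rightarrow> smat \<Rightarrow> bool" where
  "block_lower_unitriangular D S \<longleftrightarrow>
     (\<forall>i j. blk D i < blk D j \<longrightarrow> S i j = 0) \<and>
     (\<forall>i j. blk D i = blk D j \<longrightarrow> S i j = (if i = j then 1 else 0))"

definition block_diagonal :: "nat \<Rightarrow> smat \<Rightarrow> bool" where
  "block_diagonal D H \<longleftrightarrow> (\<forall>i j. blk D i \<noteq> blk D j \<longrightarrow> H i j = 0)"

(* G = S^{-1} H S^{-T} with S block lower unitriangular and H block diagonal; since S is block
   lower triangular this holds iff it holds for every truncation *)
definition gauss_fact :: "nat \<Rightarrow> (mpoly \<Rightarrow> complex) \<Rightarrow> smat \<Rightarrow> smat \<Rightarrow> bool" where
  "gauss_fact D u S H \<longleftrightarrow> block_lower_unitriangular D S \<and> block_diagonal D H \<and>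
     (\<forall>k. trunc D (moment_mat D u) k =
           the (mat_inverse (trunc D S k)) * trunc D H k * transpose_mat (the (mat_inverse (trunc D S k))))"

(* P(x) = S chi(x): the entry at position i, as a polynomial *)
definition Ppol :: "nat \<Rightarrow> smat \<Rightarrow> nat \<Rightarrow> mpoly" where
  "Ppol D S i = (\<Sum>j<bs D (Suc (blk D i)). csmult (S i j) (xmon (ix D j)))"

definition Rmat :: "nat \<Rightarrow> (mpoly \<Rightarrow> complex) \<Rightarrow> smat \<Rightarrow> smat" where
  "Rmat D uc S i j = uc (Ppol D S i * xmon (ix D j))"

(* last quasi-determinant: M = [[A,B],[C,D]] with A of size n x n; Theta_*(M) = D - C A^{-1} B *)
definition qdet_last :: "complex mat \<Rightarrow> nat \<Rightarrow> complex mat" where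
  "qdet_last M n = (case split_block M n n of (A, B, C, Dm) \<Rightarrow>
                      Dm - C * the (mat_inverse A) * B)"

definition Pblock :: "nat \<Rightarrow> smat \<Rightarrow> nat \<Rightarrow> (nat \<Rightarrow> complex) \<Rightarrow> complex mat" where
  "Pblock D S k x = mat (bs D (Suc k) - bs D k) 1 (\<lambda>(i, _). peval x (Ppol D S (bs D k + i)))"

definition Hblock :: "nat \<Rightarrow> smat \<Rightarrow> nat \<Rightarrow> complex mat" where
  "Hblock D H k = mat (bs D (Suc k) - bs D k) (bs D (Suc k) - bs D k)
                     (\<lambda>(i, j). H (bs D k + i) (bs D k + j))"

definition bordered :: "nat \<Rightarrow> smat \<Rightarrow> smat \<Rightarrow> nat \<Rightarrow> (nat \<Rightarrow> complex) \<Rightarrow> complex mat" where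
  "bordered D R S k x = mat (bs D (Suc k)) (Suc (bs D k))
      (\<lambda>(i, j). if j < bs D k then R i j else peval x (Ppol D S i))"

end

theory Submission
  imports Defs
begin

text \<open>
  Let \<open>Gc\<close> be the moment matrix of \<open>uc\<close>, so that \<open>Gc = Sc\<^sup>-\<^sup>1 Hc Sc\<^sup>-\<^sup>T\<close>. By linearity of
  \<open>uc\<close>, \<open>R = S Gc\<close> and \<open>P(x) = S \<chi>(x)\<close>; hence both matrices in the statement are the first
  \<open>k + 1\<close> block rows of \<open>S (Gc' | f)\<close>, where \<open>Gc'\<close> consists of the first \<open>k\<close> block columns
  of \<open>Gc\<close> and \<open>f\<close> is either its \<open>k\<close>-th block column or \<open>\<chi>(x)\<close>. The block lower
  unitriangular factor \<open>S\<close> cancels from the Schur complement, leaving \<open>Z f\<^sub>< + f\<^sub>[\<^sub>k\<^sub>]\<close> for any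
  row block \<open>(Z | I)\<close> annihilating \<open>Gc'\<close>. The \<open>k\<close>-th block row of \<open>Sc\<close> is such a row
  block, since \<open>Sc Gc = Hc Sc\<^sup>-\<^sup>T\<close> is block upper triangular. So the quasi-determinants are the
  \<open>k\<close>-th blocks of \<open>Sc \<chi>(x) = Pc(x)\<close> and of \<open>Sc Gc\<close>, whose diagonal block is \<open>Hc\<^sub>[\<^sub>k\<^sub>]\<close>.
\<close>

section \<open>Positions of multi-indices\<close>

lemma set_mis: "a \<in> set (mis d k) \<Longrightarrow> sum_list a = k \<and> length a = d"
  by (induction d arbitrary: k a) auto

lemma mis_nonempty: "d \<ge> 1 \<Longrightarrow> mis d k \<noteq> []"
proof -
  assume "d \<ge> 1"
  then obtain e where d: "d = Suc e" by (cases d) auto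
  have "mis e 0 \<noteq> []" by (induction e) auto
  moreover have "k \<in> set (rev [0..<Suc k])" by auto
  ultimately show ?thesis using d by (auto simp: concat_eq_Nil_conv)
qed

lemma bs_Suc: "bs D (Suc k) = bs D k + length (mis D k)"
  by (simp add: bs_def mono_list_def)

lemma bs_less_bs_Suc: "D \<ge> 1 \<Longrightarrow> bs D k < bs D (Suc k)"
  using mis_nonempty[of D k] by (simp add: bs_Suc)

lemma le_bs: "D \<ge> 1 \<Longrightarrow> k \<le> bs D k"
proof (induction k)
  case (Suc k)
  then show ?case using bs_less_bs_Suc[of D k] by simp
qed simp

lemma bs_mono: "a \<le> b \<Longrightarrow> bs D a \<le> bs D b"
  by (induction b) (auto simp: bs_Suc le_Suc_eq)

lemma mono_list_append:
  "a \<le> b \<Longrightarrow> mono_list D b = mono_list D a @ concat (map (mis D) [a..<b])"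
  unfolding mono_list_def by (metis concat_append le_Suc_ex map_append upt_add_eq_append zero_le)

lemma nth_mono_list_indep:
  "i < bs D a \<Longrightarrow> i < bs D b \<Longrightarrow> mono_list D a ! i = mono_list D b ! i"
  by (cases "a \<le> b")
    (use mono_list_append[of a b D] mono_list_append[of b a D] in \<open>auto simp: nth_append bs_def\<close>)

lemma ix_eq_nth_mono_list: "D \<ge> 1 \<Longrightarrow> i < bs D N \<Longrightarrow> ix D i = mono_list D N ! i"
  unfolding ix_def by (rule nth_mono_list_indep) (use le_bs[of D "Suc i"] in auto)

lemma set_concat_mis: "a \<in> set (concat (map (mis D) ds)) \<Longrightarrow> sum_list a \<in> set ds \<and> length a = D"
  using set_mis by auto

lemma length_ix: "D \<ge> 1 \<Longrightarrow> length (ix D i) = D"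
proof -
  assume "D \<ge> 1"
  then have "ix D i \<in> set (mono_list D (Suc i))"
    using le_bs[of D "Suc i"] by (simp add: ix_def bs_def)
  then show ?thesis unfolding mono_list_def using set_concat_mis by blast
qed

lemma less_bs_iff_blk_less: assumes "D \<ge> 1" shows "i < bs D k \<longleftrightarrow> blk D i < k"
proof
  assume "i < bs D k"
  then have "ix D i \<in> set (mono_list D k)"
    using ix_eq_nth_mono_list[OF assms] by (simp add: bs_def)
  then show "blk D i < k" unfolding blk_def mono_list_def using set_concat_mis by fastforce
next
  assume blk: "blk D i < k"
  show "i < bs D k"
  proof (rule ccontr)
    assume "\<not> i < bs D k"
    define N where "N = max (Suc i) k"
    define tail where "tail = concat (map (mis D) [k..<N])"
    have "i < bs D N" using le_bs[OF assms, of "Suc i"] bs_mono[of "Suc i" N D] by (auto simp: N_def)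
    moreover have "mono_list D N = mono_list D k @ tail"
      unfolding tail_def by (rule mono_list_append) (simp add: N_def)
    ultimately have "ix D i = tail ! (i - bs D k)" "i - bs D k < length tail"
      using \<open>\<not> i < bs D k\<close> ix_eq_nth_mono_list[OF assms, of i N]
      by (simp_all add: nth_append bs_def)
    then have "ix D i \<in> set tail" by simp
    then have "k \<le> blk D i" unfolding blk_def tail_def using set_concat_mis by fastforce
    then show False using blk by simp
  qed
qed

lemma blk_eq_if_in_block: "D \<ge> 1 \<Longrightarrow> bs D k \<le> i \<Longrightarrow> i < bs D (Suc k) \<Longrightarrow> blk D i = k"
  using less_bs_iff_blk_less[of D i k] less_bs_iff_blk_less[of D i "Suc k"] by auto

lemma pring_zero: "0 \<in> pring D"
  unfolding pring_def by simp

lemma pring_add: "p \<in> pring D \<Longrightarrow> q \<in> pring D \<Longrightarrow> p + q \<in> pring D"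
  unfolding pring_def using keys_add by fastforce

lemma pring_mult: "p \<in> pring D \<Longrightarrow> q \<in> pring D \<Longrightarrow> p * q \<in> pring D"
  unfolding pring_def by (force dest!: set_mp[OF keys_mult] dest: set_mp[OF keys_add])

lemma pring_csmult: "p \<in> pring D \<Longrightarrow> csmult c p \<in> pring D"
  unfolding csmult_def by (rule pring_mult) (simp_all add: pring_def)

lemma pring_sum: "(\<And>l. l \<in> A \<Longrightarrow> f l \<in> pring D) \<Longrightarrow> sum f A \<in> pring D"
  by (induction A rule: infinite_finite_induct) (auto intro: pring_add pring_zero)

lemma keys_mexp: "Poly_Mapping.keys (mexp a) \<subseteq> {..<length a}"
proof
  fix j assume "j \<in> Poly_Mapping.keys (mexp a)"
  moreover have "Poly_Mapping.lookup (mexp a) j = 0" if "j \<ge> length a"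
    unfolding mexp_def lookup_sum using that by (intro sum.neutral) (auto simp: lookup_single when_def)
  ultimately show "j \<in> {..<length a}" by (force simp: in_keys_iff)
qed

lemma pring_xmon_ix: "D \<ge> 1 \<Longrightarrow> xmon (ix D i) \<in> pring D"
  unfolding pring_def xmon_def using keys_mexp length_ix by fastforce

lemma lin_fun_zero: "lin_fun D u \<Longrightarrow> u 0 = 0"
  unfolding lin_fun_def using pring_zero by (metis add_0 add_cancel_right_right)

lemma lin_fun_sum:
  assumes "lin_fun D u" "finite A" "\<And>l. l \<in> A \<Longrightarrow> f l \<in> pring D"
  shows "u (sum f A) = (\<Sum>l\<in>A. u (f l))"
  using assms(2,3)
proof (induction A rule: finite_induct)
  case empty
  then show ?case using lin_fun_zero[OF assms(1)] by simp
next
  case (insert a A)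
  then have "f a \<in> pring D" "sum f A \<in> pring D" using pring_sum[of A f D] by auto
  then show ?case using insert assms(1) unfolding lin_fun_def by simp
qed

lemma peval_superset:
  "finite K \<Longrightarrow> Poly_Mapping.keys p \<subseteq> K \<Longrightarrow>
   peval x p = (\<Sum>m\<in>K. Poly_Mapping.lookup p m * (\<Prod>i\<in>Poly_Mapping.keys m. x i ^ Poly_Mapping.lookup m i))"
  unfolding peval_def by (rule sum.mono_neutral_left) (auto simp: in_keys_iff)

lemma peval_add: "peval x (p + q) = peval x p + peval x q"
proof -
  let ?K = "Poly_Mapping.keys p \<union> Poly_Mapping.keys q"
  have "finite ?K" by simp
  then show ?thesis
    using peval_superset[of ?K "p + q" x] peval_superset[of ?K p x] peval_superset[of ?K q x]
      keys_add[of p q]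
    by (simp add: lookup_add distrib_right sum.distrib)
qed

lemma peval_zero: "peval x 0 = 0"
  unfolding peval_def by simp

lemma peval_sum: "peval x (sum f A) = (\<Sum>l\<in>A. peval x (f l))"
  by (induction A rule: infinite_finite_induct) (auto simp: peval_zero peval_add)

lemma peval_csmult: "peval x (csmult c p) = c * peval x p"
proof -
  have lookup: "Poly_Mapping.lookup (csmult c p) m = c * Poly_Mapping.lookup p m" for m
    unfolding csmult_def by (simp add: mult_map_scale_conv_mult[symmetric] map.rep_eq when_def)
  then have "Poly_Mapping.keys (csmult c p) \<subseteq> Poly_Mapping.keys p" by (auto simp: in_keys_iff)
  then show ?thesis
    using peval_superset[where K = "Poly_Mapping.keys p" and p = "csmult c p" and x = x]
      peval_superset[where K = "Poly_Mapping.keys p" and p = p and x = x]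
    by (simp add: lookup sum_distrib_left mult.assoc)
qed

section \<open>Block lower unitriangular matrices\<close>

lemma sum_lessThan_add: "(\<Sum>l<(m::nat) + r. g l) = (\<Sum>l<m. g l) + (\<Sum>l<r. g (m + l))"
  by (induction r) (auto simp: add.assoc)

lemma sum_lessThan_add_unit_row:
  fixes s g :: "nat \<Rightarrow> 'a::semiring_1"
  assumes "\<forall>l<r. s (m + l) = (if i = l then 1 else 0)" "i < r"
  shows "(\<Sum>l<m + r. s l * g l) = (\<Sum>l<m. s l * g l) + g (m + i)"
proof -
  have "(\<Sum>l<r. s (m + l) * g (m + l)) = (\<Sum>l<r. if l = i then g (m + l) else 0)"
    using assms(1) by (intro sum.cong) auto
  then show ?thesis using assms(2) unfolding sum_lessThan_add by simp
qed

lemma blut_upper_block_zero: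
  assumes "D \<ge> 1" "block_lower_unitriangular D S" "i < bs D k" "bs D k \<le> l"
  shows "S i l = 0"
proof -
  have "blk D i < blk D l"
    using assms(3,4) less_bs_iff_blk_less[OF assms(1), of i k] less_bs_iff_blk_less[OF assms(1), of l k]
    by simp
  then show ?thesis using assms(2) unfolding block_lower_unitriangular_def by blast
qed

lemma blut_diagonal_block:
  assumes "D \<ge> 1" "block_lower_unitriangular D S"
    and "i < bs D (Suc k) - bs D k" "l < bs D (Suc k) - bs D k"
  shows "S (bs D k + i) (bs D k + l) = (if i = l then 1 else 0)"
proof -
  have "blk D (bs D k + i) = k" "blk D (bs D k + l) = k"
    using blk_eq_if_in_block[OF assms(1)] assms(3,4) by auto
  then show ?thesis using assms(2) unfolding block_lower_unitriangular_def by auto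
qed

lemma blut_upper_zero:
  assumes "D \<ge> 1" "block_lower_unitriangular D S" "i < j"
  shows "S i j = 0"
proof -
  have "\<not> blk D j < blk D i"
  proof
    assume "blk D j < blk D i"
    then have "j < bs D (blk D i)" using less_bs_iff_blk_less[OF assms(1)] by simp
    moreover have "\<not> i < bs D (blk D i)" using less_bs_iff_blk_less[OF assms(1)] by simp
    ultimately show False using assms(3) by simp
  qed
  then show ?thesis
    using assms(2,3) unfolding block_lower_unitriangular_def by (cases "blk D i < blk D j") auto
qed

lemma det_trunc_blut:
  assumes "D \<ge> 1" "block_lower_unitriangular D S"
  shows "det (trunc D S k) = 1"
proof -
  have "det (trunc D S k) = prod_list (diag_mat (trunc D S k))"
    by (rule det_lower_triangular[of "bs D k"]) (use blut_upper_zero[OF assms] in \<open>auto simp: trunc_def\<close>)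
  also have "diag_mat (trunc D S k) = replicate (bs D k) 1"
    using assms(2) unfolding diag_mat_def trunc_def block_lower_unitriangular_def
    by (simp add: list_eq_iff_nth_eq)
  finally show ?thesis by simp
qed

lemma blut_row_sum_low:
  assumes "D \<ge> 1" "block_lower_unitriangular D S" "i < bs D k" "bs D k \<le> n"
  shows "(\<Sum>l<n. S i l * g l) = (\<Sum>l<bs D k. S i l * g l)"
  by (rule sum.mono_neutral_right) (use blut_upper_block_zero[OF assms(1,2,3)] assms(4) in auto)

lemma blut_row_sum_block:
  assumes "D \<ge> 1" "block_lower_unitriangular D S" "i < bs D (Suc k) - bs D k"
  shows "(\<Sum>l<bs D (Suc k). S (bs D k + i) l * g l)
       = (\<Sum>l<bs D k. S (bs D k + i) l * g l) + g (bs D k + i)"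
  using sum_lessThan_add_unit_row[of "bs D (Suc k) - bs D k" "S (bs D k + i)" "bs D k" i g]
    blut_diagonal_block[OF assms(1,2)] assms(3) bs_mono[of k "Suc k" D]
  by simp

lemma Rmat_eq_sum:
  assumes "D \<ge> 1" "lin_fun D uc" "block_lower_unitriangular D S" "i < bs D K"
  shows "Rmat D uc S i j = (\<Sum>l<bs D K. S i l * moment_mat D uc l j)"
proof -
  let ?N = "bs D (Suc (blk D i))"
  have prod: "Ppol D S i * xmon (ix D j) = (\<Sum>l<?N. csmult (S i l) (xmon (ix D l) * xmon (ix D j)))"
    unfolding Ppol_def sum_distrib_right csmult_def by (simp add: mult.assoc)
  have "Rmat D uc S i j = (\<Sum>l<?N. uc (csmult (S i l) (xmon (ix D l) * xmon (ix D j))))"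
    unfolding Rmat_def prod
    by (rule lin_fun_sum[OF assms(2)]) (auto intro: pring_csmult pring_mult pring_xmon_ix[OF assms(1)])
  also have "\<dots> = (\<Sum>l<?N. S i l * moment_mat D uc l j)"
    using assms(2) pring_mult pring_xmon_ix[OF assms(1)]
    unfolding lin_fun_def moment_mat_def by simp
  also have "\<dots> = (\<Sum>l<bs D K. S i l * moment_mat D uc l j)"
    using assms(4) less_bs_iff_blk_less[OF assms(1)]
    by (intro blut_row_sum_low[OF assms(1,3), symmetric] bs_mono) auto
  finally show ?thesis .
qed

lemma peval_Ppol_eq_sum:
  assumes "D \<ge> 1" "block_lower_unitriangular D S" "i < bs D K"
  shows "peval x (Ppol D S i) = (\<Sum>l<bs D K. S i l * peval x (xmon (ix D l)))"
  unfolding Ppol_def peval_sum peval_csmult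
  using assms(3) less_bs_iff_blk_less[OF assms(1)]
  by (intro blut_row_sum_low[OF assms(1,2), symmetric] bs_mono) auto

section \<open>Last quasi-determinants of products\<close>

lemma mat_inverse_exists:
  assumes "A \<in> carrier_mat n n" "det A \<noteq> (0::'a::field)"
  obtains B where "mat_inverse A = Some B" "A * B = 1\<^sub>m n" "B * A = 1\<^sub>m n" "B \<in> carrier_mat n n"
proof (cases "mat_inverse A")
  case None
  then show ?thesis
    using mat_inverse(1)[OF assms(1) None, of undefined] det_non_zero_imp_unit[OF assms, of undefined]
    by blast
next
  case (Some B)
  then show ?thesis using mat_inverse(2)[OF assms(1) Some] that by simp
qed

lemma mult_invertible_eq_zero:
  fixes X A :: "'a::field mat"
  assumes "X \<in> carrier_mat r m" "A \<in> carrier_mat m m" "det A \<noteq> 0" "X * A = 0\<^sub>m r m"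
  shows "X = 0\<^sub>m r m"
proof -
  obtain B where B: "A * B = 1\<^sub>m m" "B \<in> carrier_mat m m"
    using mat_inverse_exists[OF assms(2,3)] by metis
  have "X = X * (A * B)" using assms(1) B by simp
  also have "\<dots> = (X * A) * B" using assms(1,2) B by (simp add: assoc_mult_mat[of _ r m _ m _ m])
  finally show ?thesis using assms(4) B by simp
qed

text \<open>Schur complement of \<open>(L11 0; L21 I) (A B; C Dd)\<close>, where \<open>Ai\<close> inverts its upper left block.\<close>

lemma schur_complement_of_product:
  fixes L11 A Ai L21 B C Dd Z :: "'a::field mat"
  assumes "L11 \<in> carrier_mat m m" "A \<in> carrier_mat m m" "Ai \<in> carrier_mat m m"
    "L21 \<in> carrier_mat r m" "B \<in> carrier_mat m c" "C \<in> carrier_mat r m"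
    "Dd \<in> carrier_mat r c" "Z \<in> carrier_mat r m"
    and inv: "Ai * (L11 * A) = 1\<^sub>m m" and Z: "Z * A + C = 0\<^sub>m r m"
  shows "(L21 * B + Dd) - (L21 * A + C) * Ai * (L11 * B) = Z * B + Dd"
proof -
  have "(Ai * L11) * A = 1\<^sub>m m" using inv assms by simp
  then have AAiL: "A * (Ai * L11) = 1\<^sub>m m"
    by (rule mat_mult_left_right_inverse[rotated 2]) (use assms in auto)
  define X where "X = L21 - Z"
  have C: "C = - (Z * A)"
  proof (rule eq_matI)
    fix i j assume ij: "i < dim_row (- (Z * A))" "j < dim_col (- (Z * A))"
    have "(Z * A + C) $$ (i, j) = 0" unfolding Z using ij assms(2,8) by simp
    then show "C $$ (i, j) = (- (Z * A)) $$ (i, j)"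
      using ij assms(2,6,8) by (simp add: eq_neg_iff_add_eq_0 add.commute)
  qed (use assms in auto)
  have X: "X \<in> carrier_mat r m" using assms unfolding X_def by auto
  have "L21 * A + C = X * A"
    unfolding C X_def using assms by (simp add: minus_mult_distrib_mat add_uminus_minus_mat[of _ r m])
  then have "(L21 * A + C) * Ai * (L11 * B) = X * (A * Ai) * (L11 * B)"
    using assoc_mult_mat[OF X assms(2,3)] by simp
  also have "\<dots> = X * (A * (Ai * (L11 * B)))"
    using assms X by (simp add: assoc_mult_mat[of _ r m _ m _ c] assoc_mult_mat[of _ m m _ m _ c])
  also have "\<dots> = X * ((A * (Ai * L11)) * B)"
    using assms by (simp add: assoc_mult_mat[of _ m m _ m _ c])
  also have "\<dots> = L21 * B - Z * B"
    unfolding AAiL X_def using assms by (simp add: minus_mult_distrib_mat)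
  finally show ?thesis by (intro eq_matI) (use assms in auto)
qed

lemma qdet_last_product:
  fixes S Z G f :: smat and F :: "nat \<times> nat \<Rightarrow> complex"
  assumes mn: "m \<le> n"
    and S_upper: "\<forall>i<m. \<forall>l. m \<le> l \<longrightarrow> l < n \<longrightarrow> S i l = 0"
    and S_diag: "\<forall>i<n-m. \<forall>l<n-m. S (m+i) (m+l) = (if i = l then 1 else 0)"
    and det_S: "det (mat m m (\<lambda>(i,j). S i j)) \<noteq> 0"
    and det_G: "det (mat m m (\<lambda>(i,j). G i j)) \<noteq> 0"
    and F_left: "\<forall>i<n. \<forall>j<m. F (i,j) = (\<Sum>l<n. S i l * G l j)"
    and F_right: "\<forall>i<n. \<forall>j<c. F (i,m+j) = (\<Sum>l<n. S i l * f l j)"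
    and Z: "\<forall>i<n-m. \<forall>j<m. (\<Sum>l<m. Z (m+i) l * G l j) + G (m+i) j = 0"
  shows "qdet_last (mat n (m+c) F) m = mat (n-m) c (\<lambda>(i,j). (\<Sum>l<m. Z (m+i) l * f l j) + f (m+i) j)"
proof -
  define r where "r = n - m"
  have n: "n = m + r" using mn r_def by simp
  define L11 where "L11 = mat m m (\<lambda>(i,j). S i j)"
  define L21 where "L21 = mat r m (\<lambda>(i,j). S (m+i) j)"
  define A where "A = mat m m (\<lambda>(i,j). G i j)"
  define B where "B = mat m c (\<lambda>(i,j). f i j)"
  define C where "C = mat r m (\<lambda>(i,j). G (m+i) j)"
  define Dd where "Dd = mat r c (\<lambda>(i,j). f (m+i) j)"
  define Zm where "Zm = mat r m (\<lambda>(i,j). Z (m+i) j)"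
  note defs = L11_def L21_def A_def B_def C_def Dd_def Zm_def
  have c: "L11 \<in> carrier_mat m m" "A \<in> carrier_mat m m" "L21 \<in> carrier_mat r m" "B \<in> carrier_mat m c"
    "C \<in> carrier_mat r m" "Dd \<in> carrier_mat r c" "Zm \<in> carrier_mat r m"
    unfolding defs by auto
  have top_rows: "(\<Sum>l<n. S i l * g l) = (\<Sum>l<m. S i l * g l)" if "i < m" for i g
    using S_upper that unfolding n sum_lessThan_add by simp
  have bottom_rows: "(\<Sum>l<n. S (m+i) l * g l) = (\<Sum>l<m. S (m+i) l * g l) + g (m+i)" if "i < r" for i g
    unfolding n using sum_lessThan_add_unit_row[of r "S (m+i)" m i g] S_diag that r_def by simp
  have "det (L11 * A) \<noteq> 0" using det_mult[OF c(1,2)] det_S det_G unfolding defs by simp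
  then obtain Ai where Ai: "mat_inverse (L11 * A) = Some Ai" "Ai * (L11 * A) = 1\<^sub>m m" "Ai \<in> carrier_mat m m"
    using mat_inverse_exists[of "L11 * A" m] c by (metis mult_carrier_mat)
  define M where "M = mat n (m+c) F"
  have blocks: "split_block M m m = (L11 * A, L11 * B, L21 * A + C, L21 * B + Dd)"
    unfolding split_block_def Let_def M_def
    by (intro prod_eqI eq_matI)
      (use c F_left F_right top_rows bottom_rows mn in
        \<open>auto simp: r_def defs scalar_prod_def atLeast0LessThan add.commute\<close>)
  have "Zm * A + C = 0\<^sub>m r m"
    by (rule eq_matI) (use c Z in \<open>auto simp: r_def defs scalar_prod_def atLeast0LessThan\<close>)
  then have "qdet_last M m = Zm * B + Dd"
    unfolding qdet_last_def blocks
    using Ai schur_complement_of_product[OF c(1,2) Ai(3) c(3-7) Ai(2)] by simp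
  also have "\<dots> = mat (n-m) c (\<lambda>(i,j). (\<Sum>l<m. Z (m+i) l * f l j) + f (m+i) j)"
    by (rule eq_matI) (use c in \<open>auto simp: r_def defs scalar_prod_def atLeast0LessThan\<close>)
  finally show ?thesis unfolding M_def .
qed

section \<open>Block rows of the Gauss factorisation\<close>

lemma gauss_fact_entry:
  assumes "D \<ge> 1" "gauss_fact D u S H" "a < bs D K" "c < bs D K"
  shows "H a c = (\<Sum>l<bs D K. (\<Sum>l'<bs D K. S a l' * moment_mat D u l' l) * S c l)"
proof -
  define n where "n = bs D K"
  define Sn where "Sn = trunc D S K"
  define W where "W = Sn * trunc D (moment_mat D u) K"
  have cS: "Sn \<in> carrier_mat n n" "transpose_mat Sn \<in> carrier_mat n n"
    and cG: "trunc D (moment_mat D u) K \<in> carrier_mat n n" and cH: "trunc D H K \<in> carrier_mat n n"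
    unfolding Sn_def n_def trunc_def by auto
  have "block_lower_unitriangular D S" using assms(2) unfolding gauss_fact_def by simp
  then obtain T where T: "mat_inverse Sn = Some T" "Sn * T = 1\<^sub>m n" "T \<in> carrier_mat n n"
    using mat_inverse_exists[OF cS(1)] det_trunc_blut[OF assms(1)] unfolding Sn_def by force
  have G: "trunc D (moment_mat D u) K = T * trunc D H K * transpose_mat T"
    using assms(2) T(1) unfolding gauss_fact_def Sn_def by simp
  have "W * transpose_mat Sn = (Sn * T) * trunc D H K * (transpose_mat T * transpose_mat Sn)"
    unfolding W_def G using cS cH T(3) by (simp add: assoc_mult_mat[of _ n n _ n _ n])
  also have "transpose_mat T * transpose_mat Sn = 1\<^sub>m n"
    using transpose_mult[OF cS(1) T(3)] T(2) by simp
  finally have WS: "W * transpose_mat Sn = trunc D H K"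
    using T(2) cH by simp
  have "H a c = trunc D H K $$ (a, c)"
    using assms(3,4) by (simp add: trunc_def)
  also have "\<dots> = (W * transpose_mat Sn) $$ (a, c)"
    unfolding WS ..
  also have "\<dots> = (\<Sum>l<n. W $$ (a, l) * S c l)"
    using assms(3,4) cS cG unfolding W_def by (simp add: n_def Sn_def trunc_def scalar_prod_def atLeast0LessThan)
  also have "\<dots> = (\<Sum>l<n. (\<Sum>l'<n. S a l' * moment_mat D u l' l) * S c l)"
    using assms(3) cS cG unfolding W_def
    by (intro sum.cong) (simp_all add: n_def Sn_def trunc_def scalar_prod_def atLeast0LessThan)
  finally show ?thesis unfolding n_def .
qed

text \<open>
  In \<open>H = (S G) S\<^sup>T\<close>, the block \<open>(S G)\<^sub>[\<^sub>k\<^sub>],\<^sub><\<close> is multiplied by the invertible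
  \<open>(S\<^sup>[\<^sup>k\<^sup>])\<^sup>T\<close> to give the zero block \<open>H\<^sub>[\<^sub>k\<^sub>],\<^sub><\<close>.
\<close>

lemma gauss_fact_block_row_left:
  fixes k :: nat
  assumes D1: "D \<ge> 1" and gf: "gauss_fact D u S H"
  defines "m \<equiv> bs D k" and "n \<equiv> bs D (Suc k)"
  assumes i: "i < n - m" and j: "j < m"
  shows "(\<Sum>l<n. S (m+i) l * moment_mat D u l j) = 0"
proof -
  define W where "W a b = (\<Sum>l<n. S a l * moment_mat D u l b)" for a b
  have blut: "block_lower_unitriangular D S" and bd: "block_diagonal D H"
    using gf unfolding gauss_fact_def by auto
  define Wk where "Wk = mat (n - m) m (\<lambda>(i,l). W (m+i) l)"
  have WkS: "Wk * transpose_mat (trunc D S k) = 0\<^sub>m (n - m) m"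
  proof (rule eq_matI)
    fix i c assume "i < dim_row (0\<^sub>m (n - m) m :: complex mat)" "c < dim_col (0\<^sub>m (n - m) m :: complex mat)"
    then have i: "i < n - m" and c: "c < m" by auto
    have "(Wk * transpose_mat (trunc D S k)) $$ (i, c) = (\<Sum>l<m. W (m+i) l * S c l)"
      using i c unfolding Wk_def by (simp add: trunc_def scalar_prod_def atLeast0LessThan m_def)
    also have "\<dots> = H (m+i) c"
      using gauss_fact_entry[OF D1 gf, of "m+i" "Suc k" c] blut_row_sum_low[OF D1 blut, of c k n "W (m+i)"]
        bs_mono[of k "Suc k" D] i c
      unfolding W_def m_def n_def by (simp add: mult.commute)
    also have "\<dots> = 0"
      using bd blk_eq_if_in_block[OF D1, of k "m+i"] less_bs_iff_blk_less[OF D1, of c k] i c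
      unfolding block_diagonal_def m_def n_def by auto
    finally show "(Wk * transpose_mat (trunc D S k)) $$ (i, c) = 0\<^sub>m (n - m) m $$ (i, c)"
      using i c by simp
  qed (auto simp: Wk_def trunc_def m_def)
  have "transpose_mat (trunc D S k) \<in> carrier_mat m m"
    by (simp add: trunc_def m_def)
  moreover have "det (transpose_mat (trunc D S k)) \<noteq> 0"
    using det_transpose[of "trunc D S k" m] det_trunc_blut[OF D1 blut, of k] by (simp add: trunc_def m_def)
  ultimately have "Wk = 0\<^sub>m (n - m) m"
    using mult_invertible_eq_zero[OF _ _ _ WkS] by (simp add: Wk_def)
  moreover have "W (m+i) j = Wk $$ (i, j)" using i j by (simp add: Wk_def)
  ultimately show ?thesis using i j by (simp add: W_def)
qed

lemma gauss_fact_block_row_diagonal: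
  fixes k :: nat
  assumes D1: "D \<ge> 1" and gf: "gauss_fact D u S H"
  defines "m \<equiv> bs D k" and "n \<equiv> bs D (Suc k)"
  assumes i: "i < n - m" and j: "j < n - m"
  shows "(\<Sum>l<n. S (m+i) l * moment_mat D u l (m+j)) = H (m+i) (m+j)"
proof -
  define W where "W a b = (\<Sum>l<n. S a l * moment_mat D u l b)" for a b
  have blut: "block_lower_unitriangular D S" using gf unfolding gauss_fact_def by simp
  have "H (m+i) (m+j) = (\<Sum>l<n. W (m+i) l * S (m+j) l)"
    using gauss_fact_entry[OF D1 gf, of "m+i" "Suc k" "m+j"] i j unfolding W_def m_def n_def by simp
  also have "\<dots> = (\<Sum>l<m. S (m+j) l * W (m+i) l) + W (m+i) (m+j)"
    using blut_row_sum_block[OF D1 blut j[unfolded m_def n_def], of "W (m+i)"]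
    unfolding m_def n_def by (simp add: mult.commute)
  also have "\<dots> = W (m+i) (m+j)"
    using gauss_fact_block_row_left[OF D1 gf, of i k] i unfolding W_def m_def n_def by simp
  finally show ?thesis unfolding W_def by simp
qed

section \<open>Quasi-determinantal formulas\<close>

lemma qdet_last_Rmat_columns:
  fixes k :: nat and F :: "nat \<times> nat \<Rightarrow> complex" and f :: smat
  assumes D1: "D \<ge> 1" and lin: "lin_fun D uc" and blut: "block_lower_unitriangular D S"
    and qd: "quasi_definite D uc" and gf: "gauss_fact D uc Sc Hc"
  defines "m \<equiv> bs D k" and "n \<equiv> bs D (Suc k)"
  assumes F_left: "\<forall>i<n. \<forall>j<m. F (i,j) = Rmat D uc S i j"
    and F_right: "\<forall>i<n. \<forall>j<c. F (i,m+j) = (\<Sum>l<n. S i l * f l j)"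
  shows "qdet_last (mat n (m+c) F) m = mat (n-m) c (\<lambda>(i,j). \<Sum>l<n. Sc (m+i) l * f l j)"
proof -
  have blut_c: "block_lower_unitriangular D Sc" using gf unfolding gauss_fact_def by simp
  have row_Sc: "(\<Sum>l<n. Sc (m+i) l * g l) = (\<Sum>l<m. Sc (m+i) l * g l) + g (m+i)" if "i < n - m" for i g
    using blut_row_sum_block[OF D1 blut_c] that unfolding m_def n_def by simp
  have "qdet_last (mat n (m+c) F) m
      = mat (n-m) c (\<lambda>(i,j). (\<Sum>l<m. Sc (m+i) l * f l j) + f (m+i) j)"
  proof (rule qdet_last_product[where G = "moment_mat D uc"])
    show "m \<le> n" unfolding m_def n_def by (rule bs_mono) simp
    show "\<forall>i<m. \<forall>l. m \<le> l \<longrightarrow> l < n \<longrightarrow> S i l = 0"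
      using blut_upper_block_zero[OF D1 blut] unfolding m_def by blast
    show "\<forall>i<n-m. \<forall>l<n-m. S (m+i) (m+l) = (if i = l then 1 else 0)"
      using blut_diagonal_block[OF D1 blut] unfolding m_def n_def by blast
    show "det (mat m m (\<lambda>(i,j). S i j)) \<noteq> 0"
      using det_trunc_blut[OF D1 blut, of k] unfolding trunc_def m_def by simp
    show "det (mat m m (\<lambda>(i,j). moment_mat D uc i j)) \<noteq> 0"
      using qd unfolding quasi_definite_def trunc_def m_def by blast
    show "\<forall>i<n. \<forall>j<m. F (i,j) = (\<Sum>l<n. S i l * moment_mat D uc l j)"
      using F_left Rmat_eq_sum[OF D1 lin blut] unfolding n_def by simp
    show "\<forall>i<n-m. \<forall>j<m. (\<Sum>l<m. Sc (m+i) l * moment_mat D uc l j) + moment_mat D uc (m+i) j = 0"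
      using gauss_fact_block_row_left[OF D1 gf, of _ k] row_Sc unfolding m_def n_def by simp
  qed (use F_right in simp)
  also have "\<dots> = mat (n-m) c (\<lambda>(i,j). \<Sum>l<n. Sc (m+i) l * f l j)"
    using row_Sc by (intro eq_matI) auto
  finally show ?thesis .
qed

lemma Hblock_eq_qdet_last:
  assumes "D \<ge> 1" "lin_fun D uc" "block_lower_unitriangular D S"
    "quasi_definite D uc" "gauss_fact D uc Sc Hc"
  shows "Hblock D Hc k = qdet_last (trunc D (Rmat D uc S) (Suc k)) (bs D k)"
proof -
  define m where "m = bs D k"
  define n where "n = bs D (Suc k)"
  have "trunc D (Rmat D uc S) (Suc k) = mat n (m + (n - m)) (\<lambda>(i,j). Rmat D uc S i j)"
    using bs_mono[of k "Suc k" D] unfolding trunc_def m_def n_def by simp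
  also have "qdet_last \<dots> m = mat (n-m) (n-m) (\<lambda>(i,j). \<Sum>l<n. Sc (m+i) l * moment_mat D uc l (m+j))"
    using qdet_last_Rmat_columns[OF assms, of k] Rmat_eq_sum[OF assms(1-3)]
    unfolding m_def n_def by simp
  also have "\<dots> = Hblock D Hc k"
    using gauss_fact_block_row_diagonal[OF assms(1,5), of _ k] unfolding Hblock_def m_def n_def
    by (intro eq_matI) auto
  finally show ?thesis unfolding m_def ..
qed

lemma Pblock_eq_qdet_last:
  assumes "D \<ge> 1" "lin_fun D uc" "block_lower_unitriangular D S"
    "quasi_definite D uc" "gauss_fact D uc Sc Hc"
  shows "Pblock D Sc k x = qdet_last (bordered D (Rmat D uc S) S k x) (bs D k)"
proof -
  define m where "m = bs D k"
  define n where "n = bs D (Suc k)"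
  have blut_c: "block_lower_unitriangular D Sc" using assms(5) unfolding gauss_fact_def by simp
  have "qdet_last (bordered D (Rmat D uc S) S k x) m
      = mat (n-m) 1 (\<lambda>(i,j). \<Sum>l<n. Sc (m+i) l * peval x (xmon (ix D l)))"
    unfolding bordered_def m_def[symmetric] n_def[symmetric]
    using qdet_last_Rmat_columns[OF assms, of k _ 1] peval_Ppol_eq_sum[OF assms(1,3)]
    unfolding m_def n_def by simp
  also have "\<dots> = Pblock D Sc k x"
    using peval_Ppol_eq_sum[OF assms(1) blut_c, where K = "Suc k"] bs_mono[of k "Suc k" D]
    unfolding Pblock_def m_def n_def by (intro eq_matI) auto
  finally show ?thesis unfolding m_def ..
qed

text \<open>
  Only the Gauss factorisation of \<open>uc\<close> and the block unitriangularity of \<open>S\<close> enter.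
\<close>

theorem mainTheorem3:
  fixes D :: nat and u uc :: "mpoly \<Rightarrow> complex" and Q2 :: mpoly
    and S H Sc Hc :: smat and k :: nat and x :: "nat \<Rightarrow> complex"
  assumes "D \<ge> 1"
    and "lin_fun D u" and "lin_fun D uc"
    and "Q2 \<in> pring D"
    and "\<forall>p\<in>pring D. u p = uc (Q2 * p)"
    and "quasi_definite D u" and "quasi_definite D uc"
    and "gauss_fact D u S H" and "gauss_fact D uc Sc Hc"
    and "k \<ge> 1"
  shows "Pblock D Sc k x = qdet_last (bordered D (Rmat D uc S) S k x) (bs D k) \<and>
         Hblock D Hc k = qdet_last (trunc D (Rmat D uc S) (Suc k)) (bs D k)"
proof -
  have "block_lower_unitriangular D S" using assms(8) unfolding gauss_fact_def by simp
  then show ?thesis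
    using Pblock_eq_qdet_last Hblock_eq_qdet_last assms(1,3,7,9) by blast
qed

end
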